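(* Let $R$ be a process and $X=(X_1,\dots,X_m)$ a risk basis with $R(t)=\varrho((X_1,\dots,X_m)^t)$ for a mapping $\varrho$. Suppose $X$ generates the ISU decomposition $D(t)=(D_1(t),\dots,D_m(t))$ of $R(t)-R(0)$ with respect to a sequence of partitions $(\mathcal T_n(t))_n$ of $[0,t]$ with vanishing mesh. Let $\mathcal G$ be a sub-$\sigma$-algebra of $\mathcal A$. Suppose the SU decompositions $D^n(t)=(D^n_1(t),\dots,D^n_m(t))$ of $R(t)-R(0)$ with respect to $\mathcal T_n(t)$ satisfy $|D^n_i(t)|\le Y$ for all $i=1,\dots,m$ and $n\in\mathbb N$, for some integrable random variable $Y$. Then the ISU decomposition (with respect to the same sequence of partitions) of $$\widetilde R(t)=\widetilde\varrho((X_1,\dots,X_m)^t):=\mathbb E\big[\varrho((X_1,\dots,X_m)^t)\,\big|\,\mathcal G\big],$$ where $\widetilde\varrho(\cdot):=\mathbb E[\varrho(\cdot)\mid\mathcal G]$, is $$\widetilde D(t)=\big(\mathbb E[D_1(t)\mid\mathcal G],\dots,\mathbb E[D_m(t)\mid\mathcal G]\big).$$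
   Context: **Setting.** $(\Omega,\mathcal A,\mathbb P)$ is a probability space. For a process $Y$, $Y^t(s)=Y(\min(s,t))$, componentwise for tuples. **Surface.** $U(t_1,\dots,t_m)=\varrho((X_1^{t_1},\dots,X_m^{t_m}))$. **SU decomposition.** For a partition $0=t_0<\dots<t_k=t$, the SU decomposition of $R(t)-R(0)$ is $$D_i(t)=\sum_{l=0}^{k-1}\Big(U(\underbrace{t_{l+1},\dots,t_{l+1}}_{i},t_l,\dots,t_l)-U(\underbrace{t_{l+1},\dots,t_{l+1}}_{i-1},t_l,\dots,t_l)\Big),\quad i=1,\dots,m.$$ **ISU decomposition.** For partitions $\mathcal T_n(t)$ with maximal step length tending to $0$, the ISU decomposition is $D(t)$ with $D_i(t)=\operatorname{plim}_{n\to\infty}D^n_i(t)$ (limit in probability), where $D^n(t)$ are the SU decompositions with respect to $\mathcal T_n(t)$. *)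

theory Defs
  imports "HOL-Probability.Probability"
begin

text \<open>Processes are indexed by coordinate j (0-based, j < m), time s, and outcome.
  The stopped tuple (X_1^{t_1},...,X_m^{t_m}); coordinates j >= m are set to 0.\<close>
definition stopped_tuple ::
  "nat \<Rightarrow> (nat \<Rightarrow> real \<Rightarrow> 'a \<Rightarrow> real) \<Rightarrow> (nat \<Rightarrow> real) \<Rightarrow> nat \<Rightarrow> real \<Rightarrow> 'a \<Rightarrow> real" where
  "stopped_tuple m X ts = (\<lambda>j s \<omega>. if j < m then X j (min s (ts j)) \<omega> else 0)"

definition surface ::
  "((nat \<Rightarrow> real \<Rightarrow> 'a \<Rightarrow> real) \<Rightarrow> 'a \<Rightarrow> real) \<Rightarrow> nat \<Rightarrow> (nat \<Rightarrow> real \<Rightarrow> 'a \<Rightarrow> real)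
     \<Rightarrow> (nat \<Rightarrow> real) \<Rightarrow> 'a \<Rightarrow> real" where
  "surface \<rho> m X ts = \<rho> (stopped_tuple m X ts)"

definition is_partition :: "real \<Rightarrow> nat \<Rightarrow> (nat \<Rightarrow> real) \<Rightarrow> bool" where
  "is_partition t k p \<longleftrightarrow> p 0 = 0 \<and> p k = t \<and> (\<forall>l<k. p l < p (Suc l))"

definition mesh :: "nat \<Rightarrow> (nat \<Rightarrow> real) \<Rightarrow> real" where
  "mesh k p = (if k = 0 then 0 else Max ((\<lambda>l. p (Suc l) - p l) ` {..<k}))"

text \<open>The i-th component (0-based: i = 0..m-1 corresponds to the paper's i+1) of the
  SU decomposition w.r.t. the partition p of length k.\<close>
definition su_dec ::
  "((nat \<Rightarrow> real \<Rightarrow> 'a \<Rightarrow> real) \<Rightarrow> 'a \<Rightarrow> real) \<Rightarrow> nat \<Rightarrow> (nat \<Rightarrow> real \<Rightarrow> 'a \<Rightarrow> real)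
     \<Rightarrow> nat \<Rightarrow> (nat \<Rightarrow> real) \<Rightarrow> nat \<Rightarrow> 'a \<Rightarrow> real" where
  "su_dec \<rho> m X k p i = (\<lambda>\<omega>. \<Sum>l<k.
      surface \<rho> m X (\<lambda>j. if j \<le> i then p (Suc l) else p l) \<omega>
    - surface \<rho> m X (\<lambda>j. if j < i then p (Suc l) else p l) \<omega>)"

definition conv_in_prob :: "'a measure \<Rightarrow> (nat \<Rightarrow> 'a \<Rightarrow> real) \<Rightarrow> ('a \<Rightarrow> real) \<Rightarrow> bool" where
  "conv_in_prob M Yn Z \<longleftrightarrow> (\<forall>n. Yn n \<in> borel_measurable M) \<and> Z \<in> borel_measurable M \<and>
     (\<forall>e>0. (\<lambda>n. measure M {\<omega> \<in> space M. e < \<bar>Yn n \<omega> - Z \<omega>\<bar>}) \<longlonglongrightarrow> 0)"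

definition is_ISU ::
  "'a measure \<Rightarrow> ((nat \<Rightarrow> real \<Rightarrow> 'a \<Rightarrow> real) \<Rightarrow> 'a \<Rightarrow> real) \<Rightarrow> nat \<Rightarrow> (nat \<Rightarrow> real \<Rightarrow> 'a \<Rightarrow> real)
     \<Rightarrow> (nat \<Rightarrow> nat) \<Rightarrow> (nat \<Rightarrow> nat \<Rightarrow> real) \<Rightarrow> (nat \<Rightarrow> 'a \<Rightarrow> real) \<Rightarrow> bool" where
  "is_ISU M \<rho> m X k p D \<longleftrightarrow> (\<forall>i<m. conv_in_prob M (\<lambda>n. su_dec \<rho> m X (k n) (p n) i) (D i))"

end

theory Submission
  imports Defs
begin

text \<open>Conditional expectation is linear, so almost surely the conditional expectation of an SU
  component of \<open>\<rho>\<close> is the corresponding SU component of \<open>E[\<rho>(\<cdot>) | G]\<close>. It therefore suffices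
  that conditional expectation preserves dominated convergence in probability. Domination by an
  integrable \<open>Y\<close> passes to the limit, and then convergence in probability upgrades to \<open>L\<^sup>1\<close>
  convergence: split \<open>|S\<^sub>n - Z|\<close> into a part below a threshold \<open>e\<close>, a part bounded by
  \<open>2K\<close> on the event \<open>{|S\<^sub>n - Z| > e}\<close> of vanishing probability, and the tail \<open>2Y\<close> on
  \<open>{Y > K}\<close>. Conditional expectation is an \<open>L\<^sup>1\<close> contraction, and \<open>L\<^sup>1\<close> convergence gives
  convergence in probability by Markov's inequality.\<close>

lemma is_partition_bounds:
  assumes "is_partition t k p" "l \<le> k"
  shows "0 \<le> p l" "p l \<le> t"
proof -
  have step: "p n \<le> p (Suc n)" if "n < k" for n
    using assms(1) that unfolding is_partition_def by (simp add: less_imp_le)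
  have "p 0 \<le> p l"
    using \<open>l \<le> k\<close> by (induction l) (auto dest!: Suc_le_lessD step)
  then show "0 \<le> p l"
    using assms(1) unfolding is_partition_def by simp
  have "p l \<le> p k"
    using \<open>l \<le> k\<close> by (induction rule: dec_induct) (auto dest!: step)
  then show "p l \<le> t"
    using assms(1) unfolding is_partition_def by simp
qed

lemma conv_in_prob_AE_cong:
  assumes conv: "conv_in_prob M S Z"
    and [measurable]: "\<And>n. S' n \<in> borel_measurable M" "Z' \<in> borel_measurable M"
    and ae: "\<And>n. AE x in M. S n x = S' n x" "AE x in M. Z x = Z' x"
  shows "conv_in_prob M S' Z'"
proof -
  have [measurable]: "S n \<in> borel_measurable M" "Z \<in> borel_measurable M" for n
    using conv unfolding conv_in_prob_def by auto
  have "measure M {\<omega> \<in> space M. e < \<bar>S' n \<omega> - Z' \<omega>\<bar>} = measure M {\<omega> \<in> space M. e < \<bar>S n \<omega> - Z \<omega>\<bar>}"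
    for e n by (intro measure_eq_AE) (use ae(1)[of n] ae(2) in \<open>auto elim: AE_mp\<close>)
  then show ?thesis
    using conv unfolding conv_in_prob_def by simp
qed

lemma tendsto_integral_upper_tail:
  fixes Y :: "'a \<Rightarrow> real"
  assumes Y: "integrable M Y"
  shows "(\<lambda>K::nat. \<integral>\<omega>. (if real K < Y \<omega> then Y \<omega> else 0) \<partial>M) \<longlonglongrightarrow> 0"
proof -
  have [measurable]: "Y \<in> borel_measurable M"
    using Y by simp
  have "(\<lambda>K::nat. \<integral>\<omega>. (if real K < Y \<omega> then Y \<omega> else 0) \<partial>M) \<longlonglongrightarrow> (\<integral>\<omega>. 0 \<partial>M)"
  proof (rule integral_dominated_convergence[where w = "\<lambda>\<omega>. \<bar>Y \<omega>\<bar>"])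
    show "AE \<omega> in M. (\<lambda>K::nat. if real K < Y \<omega> then Y \<omega> else 0) \<longlonglongrightarrow> 0"
    proof (rule AE_I2)
      fix \<omega>
      obtain N :: nat where "Y \<omega> \<le> real N"
        using real_arch_simple by blast
      then have "\<forall>\<^sub>F K in sequentially. (if real K < Y \<omega> then Y \<omega> else 0) = 0"
        unfolding eventually_sequentially by (intro exI[of _ N]) auto
      then show "(\<lambda>K::nat. if real K < Y \<omega> then Y \<omega> else 0) \<longlonglongrightarrow> 0"
        by (rule tendsto_eventually)
    qed
  qed (use Y in auto)
  then show ?thesis
    by simp
qed

lemma abs_diff_le_truncation:
  fixes s z y K e :: real
  assumes "\<bar>s\<bar> \<le> y" "\<bar>z\<bar> \<le> y" "0 \<le> K" "0 \<le> e"
  shows "\<bar>s - z\<bar> \<le> e + 2 * K * (if e < \<bar>s - z\<bar> then 1 else 0) + 2 * (if K < y then y else 0)"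
  using assms by (auto split: if_splits)

context finite_measure
begin

lemma conv_in_prob_limit_abs_le:
  assumes conv: "conv_in_prob M S Z" and [measurable]: "Y \<in> borel_measurable M"
    and bound: "\<And>n \<omega>. \<omega> \<in> space M \<Longrightarrow> \<bar>S n \<omega>\<bar> \<le> Y \<omega>"
  shows "AE \<omega> in M. \<bar>Z \<omega>\<bar> \<le> Y \<omega>"
proof -
  have [measurable]: "S n \<in> borel_measurable M" "Z \<in> borel_measurable M" for n
    using conv unfolding conv_in_prob_def by auto
  have "AE \<omega> in M. \<bar>Z \<omega>\<bar> \<le> Y \<omega> + e" if "0 < e" for e
  proof -
    let ?B = "{\<omega> \<in> space M. Y \<omega> + e < \<bar>Z \<omega>\<bar>}"
    have "measure M ?B \<le> measure M {\<omega> \<in> space M. e < \<bar>S n \<omega> - Z \<omega>\<bar>}" for n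
      by (intro finite_measure_mono) (auto dest: bound[of _ n])
    moreover have "(\<lambda>n. measure M {\<omega> \<in> space M. e < \<bar>S n \<omega> - Z \<omega>\<bar>}) \<longlonglongrightarrow> 0"
      using conv \<open>0 < e\<close> unfolding conv_in_prob_def by simp
    ultimately have "measure M ?B \<le> 0"
      by (intro LIMSEQ_le_const) auto
    then have "emeasure M ?B = 0"
      by (simp add: emeasure_eq_measure measure_le_0_iff)
    then show ?thesis
      by (subst AE_iff_measurable[OF _ refl]) (auto simp: not_le)
  qed
  then have "AE \<omega> in M. \<forall>j::nat. \<bar>Z \<omega>\<bar> \<le> Y \<omega> + inverse (real (Suc j))"
    by (simp add: AE_all_countable)
  then show ?thesis
  proof eventually_elim
    case (elim \<omega>)
    show ?case
    proof (rule field_le_epsilon)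
      fix e :: real assume "0 < e"
      then obtain j where "inverse (real (Suc j)) < e"
        using reals_Archimedean by blast
      then show "\<bar>Z \<omega>\<bar> \<le> Y \<omega> + e"
        using elim[rule_format, of j] by linarith
    qed
  qed
qed

lemma conv_in_prob_dominated_integrable:
  assumes conv: "conv_in_prob M S Z" and Y: "integrable M Y"
    and bound: "\<And>n \<omega>. \<omega> \<in> space M \<Longrightarrow> \<bar>S n \<omega>\<bar> \<le> Y \<omega>"
  shows "integrable M (S n)" "integrable M Z"
proof -
  have [measurable]: "S n \<in> borel_measurable M" "Z \<in> borel_measurable M" for n
    using conv unfolding conv_in_prob_def by auto
  show "integrable M (S n)"
    by (intro Bochner_Integration.integrable_bound[OF Y] AE_I2) (auto dest!: bound[of _ n])
  show "integrable M Z"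
    using conv_in_prob_limit_abs_le[OF conv _ bound] Y
    by (intro Bochner_Integration.integrable_bound[OF Y]) (auto elim: AE_mp)
qed

lemma integral_abs_diff_le_truncation:
  assumes S: "integrable M S" and Z: "integrable M Z" and Y: "integrable M Y"
    and S_le: "\<And>\<omega>. \<omega> \<in> space M \<Longrightarrow> \<bar>S \<omega>\<bar> \<le> Y \<omega>" and Z_le: "AE \<omega> in M. \<bar>Z \<omega>\<bar> \<le> Y \<omega>"
    and "0 < e" "0 \<le> K"
  shows "(\<integral>\<omega>. \<bar>S \<omega> - Z \<omega>\<bar> \<partial>M) \<le> e * measure M (space M)
    + 2 * K * measure M {\<omega> \<in> space M. e < \<bar>S \<omega> - Z \<omega>\<bar>} + 2 * (\<integral>\<omega>. (if K < Y \<omega> then Y \<omega> else 0) \<partial>M)"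
proof -
  have [measurable]: "S \<in> borel_measurable M" "Z \<in> borel_measurable M" "Y \<in> borel_measurable M"
    using S Z Y by auto
  define A where "A = {\<omega> \<in> space M. e < \<bar>S \<omega> - Z \<omega>\<bar>}"
  have [measurable]: "A \<in> sets M"
    unfolding A_def by measurable
  have tail_int: "integrable M (\<lambda>\<omega>. if K < Y \<omega> then Y \<omega> else 0)"
    by (rule Bochner_Integration.integrable_bound[OF Y]) auto
  have indicator_int: "integrable M (indicator A :: 'a \<Rightarrow> real)"
    by (intro integrable_real_indicator) (auto simp: emeasure_eq_measure)
  have "(\<integral>\<omega>. \<bar>S \<omega> - Z \<omega>\<bar> \<partial>M)
      \<le> (\<integral>\<omega>. e + 2 * K * indicator A \<omega> + 2 * (if K < Y \<omega> then Y \<omega> else 0) \<partial>M)"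
  proof (rule integral_mono_AE)
    show "AE \<omega> in M. \<bar>S \<omega> - Z \<omega>\<bar> \<le> e + 2 * K * indicator A \<omega> + 2 * (if K < Y \<omega> then Y \<omega> else 0)"
      using Z_le AE_space
    proof eventually_elim
      case (elim \<omega>)
      then show ?case
        using abs_diff_le_truncation[OF S_le elim(1), of K e] \<open>0 < e\<close> \<open>0 \<le> K\<close>
        by (auto simp: A_def indicator_def split: if_splits)
    qed
  qed (use S Z tail_int indicator_int in \<open>auto intro!: Bochner_Integration.integrable_add\<close>)
  also have "\<dots> = (\<integral>\<omega>. e + 2 * K * indicator A \<omega> \<partial>M) + (\<integral>\<omega>. 2 * (if K < Y \<omega> then Y \<omega> else 0) \<partial>M)"
    using tail_int indicator_int by (intro Bochner_Integration.integral_add) auto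
  also have "\<dots> = e * measure M (space M) + 2 * K * measure M A
      + 2 * (\<integral>\<omega>. (if K < Y \<omega> then Y \<omega> else 0) \<partial>M)"
    using indicator_int by (subst Bochner_Integration.integral_add) auto
  finally show ?thesis
    unfolding A_def .
qed

lemma conv_in_prob_dominated_imp_L1:
  assumes conv: "conv_in_prob M S Z" and Y: "integrable M Y"
    and bound: "\<And>n \<omega>. \<omega> \<in> space M \<Longrightarrow> \<bar>S n \<omega>\<bar> \<le> Y \<omega>"
  shows "(\<lambda>n. \<integral>\<omega>. \<bar>S n \<omega> - Z \<omega>\<bar> \<partial>M) \<longlonglongrightarrow> 0"
proof (rule order_tendstoI)
  show "\<forall>\<^sub>F n in sequentially. a < (\<integral>\<omega>. \<bar>S n \<omega> - Z \<omega>\<bar> \<partial>M)" if "a < 0" for a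
    using that by (intro always_eventually allI less_le_trans[OF that] integral_nonneg_AE) auto
  fix r :: real assume "0 < r"
  define tail where "tail K = (\<integral>\<omega>. (if real K < Y \<omega> then Y \<omega> else 0) \<partial>M)" for K :: nat
  define A where "A e n = {\<omega> \<in> space M. e < \<bar>S n \<omega> - Z \<omega>\<bar>}" for e n
  have L1_bound: "(\<integral>\<omega>. \<bar>S n \<omega> - Z \<omega>\<bar> \<partial>M)
      \<le> e * measure M (space M) + 2 * real K * measure M (A e n) + 2 * tail K" if "0 < e" for e n K
    unfolding A_def tail_def
    using conv_in_prob_dominated_integrable[OF conv Y bound] conv_in_prob_limit_abs_le[OF conv _ bound] Y
    by (intro integral_abs_diff_le_truncation bound \<open>0 < e\<close>) auto
  have "\<forall>\<^sub>F K in sequentially. tail K < r / 4"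
    using order_tendstoD(2)[OF tendsto_integral_upper_tail[OF Y], of "r / 4"] \<open>0 < r\<close>
    unfolding tail_def by simp
  then obtain K where tail_K: "tail K < r / 4"
    by (meson eventually_sequentially order_refl)
  define e where "e = r / (2 * (measure M (space M) + 1))"
  have "0 < e"
    using \<open>0 < r\<close> by (simp add: e_def measure_nonneg add_nonneg_pos)
  have "e * measure M (space M) < e * (measure M (space M) + 1)"
    using \<open>0 < e\<close> by simp
  also have "\<dots> = r / 2"
    using measure_nonneg[of M "space M"] unfolding e_def
    by (simp add: field_simps add_nonneg_eq_0_iff)
  finally have "e * measure M (space M) + 2 * real K * 0 + 2 * tail K < r"
    using tail_K by simp
  moreover have "(\<lambda>n. e * measure M (space M) + 2 * real K * measure M (A e n) + 2 * tail K)
      \<longlonglongrightarrow> e * measure M (space M) + 2 * real K * 0 + 2 * tail K"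
    using conv \<open>0 < e\<close> unfolding conv_in_prob_def A_def by (intro tendsto_intros) auto
  ultimately have "\<forall>\<^sub>F n in sequentially.
      e * measure M (space M) + 2 * real K * measure M (A e n) + 2 * tail K < r"
    by (simp only: order_tendstoD(2))
  then show "\<forall>\<^sub>F n in sequentially. (\<integral>\<omega>. \<bar>S n \<omega> - Z \<omega>\<bar> \<partial>M) < r"
    by eventually_elim (use L1_bound[OF \<open>0 < e\<close>] in \<open>auto intro: le_less_trans\<close>)
qed

lemma L1_conv_imp_conv_in_prob:
  assumes [measurable]: "\<And>n. S n \<in> borel_measurable M" "Z \<in> borel_measurable M"
    and int: "\<And>n. integrable M (\<lambda>\<omega>. S n \<omega> - Z \<omega>)"
    and L1: "(\<lambda>n. \<integral>\<omega>. \<bar>S n \<omega> - Z \<omega>\<bar> \<partial>M) \<longlonglongrightarrow> 0"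
  shows "conv_in_prob M S Z"
  unfolding conv_in_prob_def
proof (intro conjI allI impI)
  fix e :: real assume "0 < e"
  have "measure M {\<omega> \<in> space M. e < \<bar>S n \<omega> - Z \<omega>\<bar>} \<le> measure M {\<omega> \<in> space M. e \<le> \<bar>S n \<omega> - Z \<omega>\<bar>}" for n
    by (intro finite_measure_mono) auto
  also have "measure M {\<omega> \<in> space M. e \<le> \<bar>S n \<omega> - Z \<omega>\<bar>} \<le> (\<integral>\<omega>. \<bar>S n \<omega> - Z \<omega>\<bar> \<partial>M) / e" for n
    using int \<open>0 < e\<close> by (intro integral_Markov_inequality_measure[where A = "space M"]) auto
  finally show "(\<lambda>n. measure M {\<omega> \<in> space M. e < \<bar>S n \<omega> - Z \<omega>\<bar>}) \<longlonglongrightarrow> 0"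
    by (intro tendsto_sandwich[OF _ _ tendsto_const tendsto_divide_zero[OF L1, of e]]) auto
qed auto

end

context sigma_finite_subalgebra
begin

lemma real_cond_exp_abs_le:
  assumes "integrable M f"
  shows "AE x in M. \<bar>real_cond_exp M F f x\<bar> \<le> real_cond_exp M F (\<lambda>x. \<bar>f x\<bar>) x"
proof -
  have "AE x in M. real_cond_exp M F f x \<le> real_cond_exp M F (\<lambda>x. \<bar>f x\<bar>) x"
    using assms by (intro real_cond_exp_mono) auto
  moreover have "AE x in M. real_cond_exp M F (\<lambda>x. - f x) x \<le> real_cond_exp M F (\<lambda>x. \<bar>f x\<bar>) x"
    using assms by (intro real_cond_exp_mono) auto
  moreover have "AE x in M. real_cond_exp M F (\<lambda>x. - f x) x = - real_cond_exp M F f x"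
    using real_cond_exp_cmult[OF assms, of "-1"] by simp
  ultimately show ?thesis
    by eventually_elim auto
qed

lemma integral_abs_real_cond_exp_le:
  assumes "integrable M f"
  shows "(\<integral>x. \<bar>real_cond_exp M F f x\<bar> \<partial>M) \<le> (\<integral>x. \<bar>f x\<bar> \<partial>M)"
proof -
  have "(\<integral>x. \<bar>real_cond_exp M F f x\<bar> \<partial>M) \<le> (\<integral>x. real_cond_exp M F (\<lambda>x. \<bar>f x\<bar>) x \<partial>M)"
    using assms by (intro integral_mono_AE real_cond_exp_abs_le integrable_abs real_cond_exp_int(1)) auto
  also have "\<dots> = (\<integral>x. \<bar>f x\<bar> \<partial>M)"
    using assms by (intro real_cond_exp_int(2)) auto
  finally show ?thesis .
qed

lemma real_cond_exp_sum_on: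
  fixes f :: "'i \<Rightarrow> 'a \<Rightarrow> real"
  assumes "\<And>i. i \<in> I \<Longrightarrow> integrable M (f i)"
  shows "AE x in M. real_cond_exp M F (\<lambda>x. \<Sum>i\<in>I. f i x) x = (\<Sum>i\<in>I. real_cond_exp M F (f i) x)"
proof -
  define g where "g i = (if i \<in> I then f i else (\<lambda>_. 0))" for i
  have "AE x in M. real_cond_exp M F (\<lambda>x. \<Sum>i\<in>I. g i x) x = (\<Sum>i\<in>I. real_cond_exp M F (g i) x)"
    using assms by (intro real_cond_exp_sum) (simp add: g_def)
  moreover have "(\<lambda>x. \<Sum>i\<in>I. g i x) = (\<lambda>x. \<Sum>i\<in>I. f i x)"
    "(\<Sum>i\<in>I. real_cond_exp M F (g i) x) = (\<Sum>i\<in>I. real_cond_exp M F (f i) x)" for x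
    by (auto simp: g_def intro!: sum.cong)
  ultimately show ?thesis
    by simp
qed

lemma real_cond_exp_sum_diff:
  fixes f g :: "'i \<Rightarrow> 'a \<Rightarrow> real"
  assumes "finite I" and int: "\<And>i. i \<in> I \<Longrightarrow> integrable M (f i)" "\<And>i. i \<in> I \<Longrightarrow> integrable M (g i)"
  shows "AE x in M. real_cond_exp M F (\<lambda>x. \<Sum>i\<in>I. f i x - g i x) x
    = (\<Sum>i\<in>I. real_cond_exp M F (f i) x - real_cond_exp M F (g i) x)"
proof -
  have "AE x in M. real_cond_exp M F (\<lambda>x. \<Sum>i\<in>I. f i x - g i x) x
      = (\<Sum>i\<in>I. real_cond_exp M F (\<lambda>x. f i x - g i x) x)"
    using int by (intro real_cond_exp_sum_on) auto
  moreover have "AE x in M. \<forall>i\<in>I. real_cond_exp M F (\<lambda>x. f i x - g i x) x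
      = real_cond_exp M F (f i) x - real_cond_exp M F (g i) x"
    using int by (intro eventually_ball_finite[OF \<open>finite I\<close>] ballI real_cond_exp_diff) auto
  ultimately show ?thesis
    by eventually_elim simp
qed

lemma real_cond_exp_su_dec:
  assumes part: "is_partition t k p"
    and int: "\<And>ts. (\<forall>j. 0 \<le> ts j \<and> ts j \<le> t) \<Longrightarrow> integrable M (\<rho> (stopped_tuple m X ts))"
  shows "AE \<omega> in M. real_cond_exp M F (su_dec \<rho> m X k p i) \<omega>
    = su_dec (\<lambda>Z. real_cond_exp M F (\<rho> Z)) m X k p i \<omega>"
proof -
  define a where "a l = (\<lambda>j. if j \<le> i then p (Suc l) else p l)" for l
  define b where "b l = (\<lambda>j. if j < i then p (Suc l) else p l)" for l
  have "integrable M (\<rho> (stopped_tuple m X (a l)))" "integrable M (\<rho> (stopped_tuple m X (b l)))"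
    if "l \<in> {..<k}" for l
    using that is_partition_bounds[OF part, of l] is_partition_bounds[OF part, of "Suc l"]
    by (auto simp: a_def b_def intro!: int)
  then have "AE \<omega> in M. real_cond_exp M F
        (\<lambda>\<omega>. \<Sum>l<k. \<rho> (stopped_tuple m X (a l)) \<omega> - \<rho> (stopped_tuple m X (b l)) \<omega>) \<omega>
      = (\<Sum>l<k. real_cond_exp M F (\<rho> (stopped_tuple m X (a l))) \<omega>
          - real_cond_exp M F (\<rho> (stopped_tuple m X (b l))) \<omega>)"
    by (intro real_cond_exp_sum_diff) auto
  then show ?thesis
    by (simp add: su_dec_def surface_def a_def b_def)
qed

end

context finite_measure_subalgebra
begin

lemma conv_in_prob_real_cond_exp:
  assumes conv: "conv_in_prob M S Z" and Y: "integrable M Y"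
    and bound: "\<And>n \<omega>. \<omega> \<in> space M \<Longrightarrow> \<bar>S n \<omega>\<bar> \<le> Y \<omega>"
  shows "conv_in_prob M (\<lambda>n. real_cond_exp M F (S n)) (real_cond_exp M F Z)"
proof (rule L1_conv_imp_conv_in_prob)
  note S_int = conv_in_prob_dominated_integrable(1)[OF conv Y bound]
  note Z_int = conv_in_prob_dominated_integrable(2)[OF conv Y bound]
  show "integrable M (\<lambda>\<omega>. real_cond_exp M F (S n) \<omega> - real_cond_exp M F Z \<omega>)" for n
    using S_int Z_int by (intro Bochner_Integration.integrable_diff real_cond_exp_int(1))
  have "(\<integral>\<omega>. \<bar>real_cond_exp M F (S n) \<omega> - real_cond_exp M F Z \<omega>\<bar> \<partial>M)
      = (\<integral>\<omega>. \<bar>real_cond_exp M F (\<lambda>\<omega>. S n \<omega> - Z \<omega>) \<omega>\<bar> \<partial>M)" for n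
    using real_cond_exp_diff[OF S_int[of n] Z_int] by (intro integral_cong_AE) (auto elim!: eventually_mono)
  also have "\<dots> n \<le> (\<integral>\<omega>. \<bar>S n \<omega> - Z \<omega>\<bar> \<partial>M)" for n
    using S_int Z_int by (intro integral_abs_real_cond_exp_le) auto
  finally show "(\<lambda>n. \<integral>\<omega>. \<bar>real_cond_exp M F (S n) \<omega> - real_cond_exp M F Z \<omega>\<bar> \<partial>M) \<longlonglongrightarrow> 0"
    by (intro tendsto_sandwich[OF _ _ tendsto_const conv_in_prob_dominated_imp_L1[OF conv Y bound]]) auto
qed auto

end

theorem lemma5p3:
  fixes M G :: "'a measure"
    and \<rho> :: "(nat \<Rightarrow> real \<Rightarrow> 'a \<Rightarrow> real) \<Rightarrow> 'a \<Rightarrow> real"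
    and X :: "nat \<Rightarrow> real \<Rightarrow> 'a \<Rightarrow> real"
    and m :: nat and t :: real
    and k :: "nat \<Rightarrow> nat" and p :: "nat \<Rightarrow> nat \<Rightarrow> real"
    and D :: "nat \<Rightarrow> 'a \<Rightarrow> real" and Y :: "'a \<Rightarrow> real"
  assumes "prob_space M"
    and "subalgebra M G"
    and "\<forall>n. is_partition t (k n) (p n)"
    and "(\<lambda>n. mesh (k n) (p n)) \<longlonglongrightarrow> 0"
    and "\<forall>ts. (\<forall>j. 0 \<le> ts j \<and> ts j \<le> t) \<longrightarrow> integrable M (\<rho> (stopped_tuple m X ts))"
    and "is_ISU M \<rho> m X k p D"
    and "integrable M Y"
    and "\<forall>i<m. \<forall>n. \<forall>\<omega>\<in>space M. \<bar>su_dec \<rho> m X (k n) (p n) i \<omega>\<bar> \<le> Y \<omega>"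
  shows "is_ISU M (\<lambda>Z. real_cond_exp M G (\<rho> Z)) m X k p (\<lambda>i. real_cond_exp M G (D i))"
  unfolding is_ISU_def
proof (intro allI impI)
  fix i assume "i < m"
  interpret prob_space M by fact
  interpret finite_measure_subalgebra M G by unfold_locales (fact assms(2))
  have "conv_in_prob M (\<lambda>n. real_cond_exp M G (su_dec \<rho> m X (k n) (p n) i)) (real_cond_exp M G (D i))"
    using assms(6-8) \<open>i < m\<close> unfolding is_ISU_def by (intro conv_in_prob_real_cond_exp[where Y = Y]) auto
  then show "conv_in_prob M (\<lambda>n. su_dec (\<lambda>Z. real_cond_exp M G (\<rho> Z)) m X (k n) (p n) i)
      (real_cond_exp M G (D i))"
  proof (rule conv_in_prob_AE_cong)
    show "AE \<omega> in M. real_cond_exp M G (su_dec \<rho> m X (k n) (p n) i) \<omega>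
        = su_dec (\<lambda>Z. real_cond_exp M G (\<rho> Z)) m X (k n) (p n) i \<omega>" for n
      using assms(3,5) by (intro real_cond_exp_su_dec[where t = t]) auto
  qed (auto simp: su_dec_def surface_def)
qed

end
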